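(* For all integers $k,n\ge 1$, $$\zeta^*(k+1,\underbrace{1,\dots,1}_{n})=\sum_{t=1}^{n+1}\ \sum_{\substack{a_1+a_2+\dots+a_t=n+1-t\\ a_i\ge 0,\ i=1,\dots,t}}\zeta(a_t+k+1,\,a_1+1,\,a_2+1,\dots,a_{t-1}+1).$$
   Context: For positive integers $k_1,\dots,k_n$ with $k_1\ge 2$, $\zeta(k_1,\dots,k_n)=\sum_{m_1>\dots>m_n\ge 1}\prod_i m_i^{-k_i}$ and $\zeta^*(k_1,\dots,k_n)=\sum_{m_1\ge\dots\ge m_n\ge 1}\prod_i m_i^{-k_i}$. $\underbrace{1,\dots,1}_{n}$ denotes $n$ entries equal to $1$. For $t=1$ the summand is $\zeta(a_1+k+1)$. *)

theory Defs
  imports "HOL-Analysis.Analysis"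
begin

definition mzv :: "nat list \<Rightarrow> real" where
  "mzv ks = infsum (\<lambda>ms. \<Prod>i<length ks. 1 / (real (ms ! i)) ^ (ks ! i))
     {ms. length ms = length ks \<and> sorted_wrt (>) ms \<and> (\<forall>m\<in>set ms. 1 \<le> m)}"

definition mzsv :: "nat list \<Rightarrow> real" where
  "mzsv ks = infsum (\<lambda>ms. \<Prod>i<length ks. 1 / (real (ms ! i)) ^ (ks ! i))
     {ms. length ms = length ks \<and> sorted_wrt (\<ge>) ms \<and> (\<forall>m\<in>set ms. 1 \<le> m)}"

end

theory Submission
  imports Defs "HOL-Real_Asymp.Real_Asymp"
begin

(* A weakly decreasing tuple m_1 >= ... >= m_{n+1} is, in a unique way, a strictly decreasing
   tuple m'_1 > ... > m'_t whose entries are repeated c_1, ..., c_t times, where (c_1, ..., c_t)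
   is a composition of n + 1.  Since all exponents of zeta*(k+1, 1, ..., 1) after the first one
   equal 1, the summand of such a tuple is m'_1^-(k+c_1) m'_2^-c_2 ... m'_t^-c_t, so grouping
   the series by compositions gives the sum of zeta(k + c_1, c_2, ..., c_t) over all compositions
   of n + 1; writing c_1 = a_t + 1 and c_i = a_(i-1) + 1 turns this into the right-hand side.
   The regrouping is justified by absolute convergence: the tuples with first entry M contribute
   H_M^n / M^(k+1) <= (1 + ln M)^n / M^2. *)

definition mzv_summand :: "nat list \<Rightarrow> nat list \<Rightarrow> real" where
  "mzv_summand ks ms = (\<Prod>i<length ks. 1 / (real (ms ! i)) ^ (ks ! i))"

definition strict_desc_lists :: "nat \<Rightarrow> nat list set" where
  "strict_desc_lists t = {ms. length ms = t \<and> sorted_wrt (>) ms \<and> (\<forall>m\<in>set ms. 1 \<le> m)}"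

definition weak_desc_lists :: "nat \<Rightarrow> nat list set" where
  "weak_desc_lists t = {ms. length ms = t \<and> sorted_wrt (\<ge>) ms \<and> (\<forall>m\<in>set ms. 1 \<le> m)}"

lemma mzv_altdef: "mzv ks = infsum (mzv_summand ks) (strict_desc_lists (length ks))"
  unfolding mzv_def mzv_summand_def strict_desc_lists_def by simp

lemma mzsv_altdef: "mzsv ks = infsum (mzv_summand ks) (weak_desc_lists (length ks))"
  unfolding mzsv_def mzv_summand_def weak_desc_lists_def by simp

lemma mzv_summand_Nil [simp]: "mzv_summand [] ms = 1"
  unfolding mzv_summand_def by simp

lemma mzv_summand_Cons [simp]: "mzv_summand (c # ks) (m # ms) = 1 / real m ^ c * mzv_summand ks ms"
  unfolding mzv_summand_def by (simp add: prod.lessThan_Suc_shift del: prod.lessThan_Suc)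

lemma mzv_summand_nonneg: "mzv_summand ks ms \<ge> 0"
  unfolding mzv_summand_def by (intro prod_nonneg) auto

lemma mzv_summand_replicate_1:
  "length ms = n \<Longrightarrow> mzv_summand (replicate n 1) ms = prod_list (map (\<lambda>m. 1 / real m) ms)"
  by (induction ms arbitrary: n) auto

fun expand_runs :: "nat list \<Rightarrow> nat list \<Rightarrow> nat list" where
  "expand_runs (m # ms) (c # cs) = replicate c m @ expand_runs ms cs"
| "expand_runs _ _ = []"

lemma set_expand_runs_subset: "set (expand_runs ms cs) \<subseteq> set ms"
  by (induction ms cs rule: expand_runs.induct) auto

lemma set_expand_runs:
  "length ms = length cs \<Longrightarrow> 0 \<notin> set cs \<Longrightarrow> set (expand_runs ms cs) = set ms"
  by (induction ms cs rule: expand_runs.induct) auto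

lemma length_expand_runs: "length ms = length cs \<Longrightarrow> length (expand_runs ms cs) = sum_list cs"
  by (induction ms cs rule: expand_runs.induct) auto

lemma sorted_expand_runs: "sorted_wrt (>) ms \<Longrightarrow> sorted_wrt (\<ge>) (expand_runs ms cs)"
proof (induction ms cs rule: expand_runs.induct)
  case (1 m ms c cs)
  have "sorted_wrt (\<ge>) (replicate c m)"
    by (induction c) auto
  moreover have "\<forall>y\<in>set (expand_runs ms cs). y \<le> m"
    using set_expand_runs_subset[of ms cs] 1 by fastforce
  ultimately show ?case
    using 1 by (auto simp: sorted_wrt_append)
qed auto

lemma prod_list_inverse_expand_runs:
  "length ms = length cs \<Longrightarrow>
    prod_list (map (\<lambda>m. 1 / real m) (expand_runs ms cs)) = mzv_summand cs ms"
  by (induction ms cs rule: expand_runs.induct) (auto simp: power_one_over)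

lemma expand_runs_inject:
  assumes "length ms = length cs" "length ms' = length cs'" "0 \<notin> set cs" "0 \<notin> set cs'"
    and "sorted_wrt (>) ms" "sorted_wrt (>) ms'" "expand_runs ms cs = expand_runs ms' cs'"
  shows "ms = ms' \<and> cs = cs'"
  using assms
proof (induction ms arbitrary: cs ms' cs')
  case Nil
  then have "sum_list cs' = 0"
    using length_expand_runs[of ms' cs'] by simp
  with Nil show ?case
    by (cases cs') auto
next
  case (Cons m ms)
  from Cons.prems obtain c cs0 m' ms1 c' cs1
    where eqs: "cs = c # cs0" "ms' = m' # ms1" "cs' = c' # cs1" "c \<noteq> 0" "c' \<noteq> 0"
    by (cases cs; cases ms'; cases cs') auto
  have runs: "replicate c m @ expand_runs ms cs0 = replicate c' m' @ expand_runs ms1 cs1"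
    using Cons.prems eqs by simp
  have "m = m'"
    using runs eqs by (cases c; cases c') auto
  \<comment> \<open>the later runs only contain smaller entries, so \<open>c\<close> and \<open>c'\<close> both count
    the occurrences of \<open>m\<close>\<close>
  moreover have "m \<notin> set (expand_runs ms cs0)" "m \<notin> set (expand_runs ms1 cs1)"
    using set_expand_runs_subset[of ms cs0] set_expand_runs_subset[of ms1 cs1] Cons.prems eqs \<open>m = m'\<close>
    by auto
  moreover have "count_list (replicate d m) m = d" for d
    by (induction d) auto
  ultimately have "c = c'"
    using arg_cong[OF runs, of "\<lambda>xs. count_list xs m"] by simp
  with runs \<open>m = m'\<close> have "expand_runs ms cs0 = expand_runs ms1 cs1"
    by simp
  with Cons.IH[of cs0 ms1 cs1] Cons.prems eqs \<open>m = m'\<close> \<open>c = c'\<close> show ?case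
    by auto
qed

lemma exists_expand_runs:
  "sorted_wrt (\<ge>) w \<Longrightarrow>
    \<exists>ms cs. length ms = length cs \<and> 0 \<notin> set cs \<and> sorted_wrt (>) ms \<and> w = expand_runs ms cs"
proof (induction w)
  case Nil
  then show ?case
    by (intro exI[of _ "[]"]) auto
next
  case (Cons x w)
  then obtain ms cs where runs: "length ms = length cs" "0 \<notin> set cs" "sorted_wrt (>) ms"
    "w = expand_runs ms cs"
    by auto
  show ?case
  proof (cases ms)
    case Nil
    with runs show ?thesis
      by (intro exI[of _ "[x]"] exI[of _ "[1]"]) auto
  next
    case (Cons m ms0)
    with runs obtain c cs0 where cs: "cs = c # cs0" "c \<noteq> 0"
      by (cases cs) auto
    with runs Cons have "m \<in> set w"
      by (cases c) auto
    with \<open>sorted_wrt (\<ge>) (x # w)\<close> have "m \<le> x"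
      by auto
    show ?thesis
    proof (cases "x = m")
      case True
      with runs Cons cs show ?thesis
        by (intro exI[of _ ms] exI[of _ "Suc c # cs0"]) auto
    next
      case False
      with runs Cons cs \<open>m \<le> x\<close> show ?thesis
        by (intro exI[of _ "x # ms"] exI[of _ "1 # cs"]) auto
    qed
  qed
qed

lemma mzv_summand_expand_runs:
  assumes "length ms = length cs" "0 \<notin> set cs" "cs \<noteq> []"
  shows "mzv_summand ((k + 1) # replicate (sum_list cs - 1) 1) (expand_runs ms cs)
    = mzv_summand ((k + hd cs) # tl cs) ms"
proof -
  from assms obtain m ms0 d cs0 where eqs: "ms = m # ms0" "cs = Suc d # cs0"
    by (cases ms; cases cs) (auto simp: gr0_conv_Suc)
  define rest where "rest = replicate d m @ expand_runs ms0 cs0"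
  have "expand_runs ms cs = m # rest"
    unfolding rest_def eqs by simp
  moreover have
    "mzv_summand (replicate (sum_list cs - 1) 1) rest = (1 / real m) ^ d * mzv_summand cs0 ms0"
  proof -
    have "length rest = sum_list cs - 1"
      using assms length_expand_runs[of ms0 cs0] unfolding rest_def eqs by simp
    then have "mzv_summand (replicate (sum_list cs - 1) 1) rest
        = prod_list (map (\<lambda>m. 1 / real m) rest)"
      by (rule mzv_summand_replicate_1)
    also have "\<dots> = (1 / real m) ^ d * mzv_summand cs0 ms0"
      using assms prod_list_inverse_expand_runs[of ms0 cs0] unfolding rest_def eqs by simp
    finally show ?thesis .
  qed
  ultimately show ?thesis
    unfolding eqs by (simp add: power_one_over power_add)
qed

definition compositions :: "nat \<Rightarrow> nat list set" where
  "compositions N = {cs. 0 \<notin> set cs \<and> sum_list cs = N}"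

lemma length_le_sum_list: "0 \<notin> set cs \<Longrightarrow> length cs \<le> sum_list (cs :: nat list)"
  by (induction cs) auto

lemma finite_compositions: "finite (compositions N)"
proof (rule finite_subset)
  show "compositions N \<subseteq> {xs. set xs \<subseteq> {0..N} \<and> length xs \<le> N}"
    unfolding compositions_def using length_le_sum_list member_le_sum_list by fastforce
qed (rule finite_lists_length_le[OF finite_atLeastAtMost])

lemma weak_desc_lists_eq_UN_expand_runs:
  "weak_desc_lists N
    = (\<Union>cs\<in>compositions N. (\<lambda>ms. expand_runs ms cs) ` strict_desc_lists (length cs))"
  (is "_ = ?runs")
proof
  show "weak_desc_lists N \<subseteq> ?runs"
  proof
    fix w assume w: "w \<in> weak_desc_lists N"
    then obtain ms cs where runs: "length ms = length cs" "0 \<notin> set cs" "sorted_wrt (>) ms"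
      "w = expand_runs ms cs"
      using exists_expand_runs unfolding weak_desc_lists_def by blast
    with w have "cs \<in> compositions N" "ms \<in> strict_desc_lists (length cs)"
      using length_expand_runs[of ms cs] set_expand_runs[of ms cs]
      unfolding compositions_def weak_desc_lists_def strict_desc_lists_def by auto
    with runs show "w \<in> ?runs"
      by blast
  qed
  show "?runs \<subseteq> weak_desc_lists N"
    unfolding compositions_def strict_desc_lists_def weak_desc_lists_def
    using length_expand_runs set_expand_runs sorted_expand_runs by fastforce
qed

lemma inj_on_expand_runs:
  "cs \<in> compositions N \<Longrightarrow> inj_on (\<lambda>ms. expand_runs ms cs) (strict_desc_lists (length cs))"
  unfolding inj_on_def compositions_def strict_desc_lists_def using expand_runs_inject by blast

lemma disjoint_expand_runs:
  "cs \<in> compositions N \<Longrightarrow> cs' \<in> compositions N \<Longrightarrow> cs \<noteq> cs' \<Longrightarrow>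
    (\<lambda>ms. expand_runs ms cs) ` strict_desc_lists (length cs) \<inter>
    (\<lambda>ms. expand_runs ms cs') ` strict_desc_lists (length cs') = {}"
  unfolding compositions_def strict_desc_lists_def using expand_runs_inject by blast

lemma sum_prod_list_lists:
  fixes f :: "'a \<Rightarrow> 'b::comm_semiring_1"
  assumes "finite A"
  shows "(\<Sum>xs\<in>{xs. set xs \<subseteq> A \<and> length xs = n}. prod_list (map f xs)) = sum f A ^ n"
proof (induction n)
  case 0
  have "{xs. set xs \<subseteq> A \<and> length xs = 0} = {[]}"
    by auto
  then show ?case
    by simp
next
  case (Suc n)
  define L where "L = {xs. set xs \<subseteq> A \<and> length xs = n}"
  have "{xs. set xs \<subseteq> A \<and> length xs = Suc n} = (\<lambda>(x, xs). x # xs) ` (A \<times> L)"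
    unfolding L_def by (auto simp: length_Suc_conv image_iff)
  moreover have "inj_on (\<lambda>(x, xs). x # xs) (A \<times> L)"
    by (auto simp: inj_on_def)
  moreover have "finite L"
    unfolding L_def using finite_lists_length_eq[OF assms] .
  ultimately have "(\<Sum>xs\<in>{xs. set xs \<subseteq> A \<and> length xs = Suc n}. prod_list (map f xs))
      = (\<Sum>(x, xs)\<in>A \<times> L. f x * prod_list (map f xs))"
    by (simp add: sum.reindex case_prod_unfold)
  also have "\<dots> = (\<Sum>x\<in>A. f x * (\<Sum>xs\<in>L. prod_list (map f xs)))"
    by (simp add: sum.cartesian_product[symmetric] sum_distrib_left)
  also have "\<dots> = sum f A ^ Suc n"
    using Suc unfolding L_def by (simp add: sum_distrib_right[symmetric])
  finally show ?case .
qed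

lemma harm_le_one_plus_ln: "M \<ge> 1 \<Longrightarrow> harm M \<le> 1 + ln (real M)"
  using euler_mascheroni_sequence_decreasing[of 1 M] by (simp add: harm_expand)

lemma summable_one_plus_ln_power_over_square:
  "summable (\<lambda>M::nat. (1 + ln (real M)) ^ n / real M ^ 2)"
  by (rule summable_comparison_test_bigo[where g = "\<lambda>M. real M powr (-3/2)"])
    (simp_all add: summable_real_powr_iff, real_asymp)

lemma summable_harm_power_over_power:
  assumes "k \<ge> 1"
  shows "summable (\<lambda>M::nat. harm M ^ n / real M ^ (k + 1))"
proof (rule summable_comparison_test'[OF summable_one_plus_ln_power_over_square])
  fix M :: nat
  assume "M \<ge> 1"
  then have "harm M ^ n \<le> (1 + ln (real M)) ^ n"
    by (intro power_mono harm_le_one_plus_ln) (auto simp: harm_nonneg)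
  moreover have "real M ^ 2 \<le> real M ^ (k + 1)"
    using \<open>M \<ge> 1\<close> assms by (intro power_increasing) auto
  ultimately show "norm (harm M ^ n / real M ^ (k + 1)) \<le> (1 + ln (real M)) ^ n / real M ^ 2"
    using \<open>M \<ge> 1\<close> by (simp add: harm_nonneg frac_le)
qed

lemma mzsv_summable:
  assumes "k \<ge> 1"
  shows "mzv_summand ((k + 1) # replicate n 1) summable_on weak_desc_lists (Suc n)"
proof -
  define F where "F = mzv_summand ((k + 1) # replicate n 1)"
  define tails where "tails M = {xs. set xs \<subseteq> {1..M} \<and> length xs = n}" for M :: nat
  have fibre_sums: "((\<lambda>xs. F (M # xs)) has_sum harm M ^ n / real M ^ (k + 1)) (tails M)" for M
  proof -
    have "(\<Sum>xs\<in>tails M. F (M # xs))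
        = 1 / real M ^ (k + 1) * (\<Sum>xs\<in>tails M. prod_list (map (\<lambda>m. 1 / real m) xs))"
      unfolding sum_distrib_left F_def tails_def mzv_summand_Cons
      by (intro sum.cong refl arg_cong[where f = "(*) _"] mzv_summand_replicate_1) simp
    also have "\<dots> = harm M ^ n / real M ^ (k + 1)"
      using sum_prod_list_lists[of "{1..M}" "\<lambda>m. 1 / real m" n]
      by (simp add: tails_def harm_def divide_inverse)
    finally show ?thesis
      using has_sum_finite[of "tails M" "\<lambda>xs. F (M # xs)"] finite_lists_length_eq[of "{1..M}" n]
      by (simp add: tails_def)
  qed
  have "(\<lambda>M. harm M ^ n / real M ^ (k + 1)) summable_on UNIV"
    using summable_harm_power_over_power[OF assms]
    by (simp add: summable_on_UNIV_nonneg_real_iff harm_nonneg)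
  then have "(\<lambda>(M, xs). F (M # xs)) summable_on Sigma UNIV tails"
    by (rule summable_on_SigmaI[rotated])
      (use fibre_sums mzv_summand_nonneg in \<open>auto simp: F_def\<close>)
  then have "F summable_on (\<lambda>(M, xs). M # xs) ` Sigma UNIV tails"
    by (subst summable_on_reindex) (auto simp: inj_on_def comp_def split_def)
  moreover have "weak_desc_lists (Suc n) \<subseteq> (\<lambda>(M, xs). M # xs) ` Sigma UNIV tails"
  proof
    fix w assume "w \<in> weak_desc_lists (Suc n)"
    then obtain M xs where "w = M # xs" "length xs = n" "set xs \<subseteq> {1..M}"
      unfolding weak_desc_lists_def by (cases w) (auto simp: subset_iff)
    then show "w \<in> (\<lambda>(M, xs). M # xs) ` Sigma UNIV tails"
      unfolding tails_def by force
  qed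
  ultimately show ?thesis
    unfolding F_def by (rule summable_on_subset_banach)
qed

lemma mzsv_eq_sum_compositions:
  assumes "k \<ge> 1"
  shows "mzsv ((k + 1) # replicate n 1)
    = (\<Sum>cs\<in>compositions (Suc n). mzv ((k + hd cs) # tl cs))"
proof -
  define F where "F = mzv_summand ((k + 1) # replicate n 1)"
  define runs where "runs cs = (\<lambda>ms. expand_runs ms cs) ` strict_desc_lists (length cs)" for cs
  have "mzsv ((k + 1) # replicate n 1) = infsum F (\<Union>cs\<in>compositions (Suc n). runs cs)"
    unfolding mzsv_altdef F_def runs_def by (simp add: weak_desc_lists_eq_UN_expand_runs)
  also have "\<dots> = (\<Sum>cs\<in>compositions (Suc n). infsum F (runs cs))"
  proof (rule sum_infsum[symmetric, OF finite_compositions])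
    fix cs assume "cs \<in> compositions (Suc n)"
    then have "runs cs \<subseteq> weak_desc_lists (Suc n)"
      unfolding runs_def weak_desc_lists_eq_UN_expand_runs by blast
    with mzsv_summable[OF assms] show "F summable_on runs cs"
      unfolding F_def by (rule summable_on_subset_banach)
  qed (use disjoint_expand_runs in \<open>auto simp: runs_def\<close>)
  also have "\<dots> = (\<Sum>cs\<in>compositions (Suc n). mzv ((k + hd cs) # tl cs))"
  proof (rule sum.cong[OF refl])
    fix cs assume cs: "cs \<in> compositions (Suc n)"
    then have cs_props: "cs \<noteq> []" "0 \<notin> set cs" "sum_list cs - 1 = n"
      unfolding compositions_def by auto
    have "infsum F (runs cs)
        = infsum (F \<circ> (\<lambda>ms. expand_runs ms cs)) (strict_desc_lists (length cs))"
      unfolding runs_def using inj_on_expand_runs[OF cs] by (rule infsum_reindex)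
    also have "\<dots> = infsum (mzv_summand ((k + hd cs) # tl cs)) (strict_desc_lists (length cs))"
    proof (rule infsum_cong)
      fix ms assume "ms \<in> strict_desc_lists (length cs)"
      then have "length ms = length cs"
        unfolding strict_desc_lists_def by simp
      with mzv_summand_expand_runs[of ms cs k] cs_props
      show "(F \<circ> (\<lambda>ms. expand_runs ms cs)) ms = mzv_summand ((k + hd cs) # tl cs) ms"
        unfolding F_def by simp
    qed
    also have "\<dots> = mzv ((k + hd cs) # tl cs)"
      using \<open>cs \<noteq> []\<close> by (simp add: mzv_altdef)
    finally show "infsum F (runs cs) = mzv ((k + hd cs) # tl cs)" .
  qed
  finally show ?thesis .
qed

lemma sum_compositions_as_weak_compositions:
  "(\<Sum>t = 1..n + 1. \<Sum>a \<in> {a :: nat list. length a = t \<and> sum_list a = n + 1 - t}.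
      h ((a ! (t - 1) + 1) # map (\<lambda>x. x + 1) (take (t - 1) a)))
    = (\<Sum>cs\<in>compositions (n + 1). h cs)"
proof -
  define A where "A t = {a :: nat list. length a = t \<and> sum_list a = n + 1 - t}" for t
  define j where
    "j = (\<lambda>(t :: nat, a :: nat list). (a ! (t - 1) + 1) # map (\<lambda>x. x + 1) (take (t - 1) a))"
  define i where "i cs = (length cs, map (\<lambda>x. x - 1) (tl cs @ [hd cs]))" for cs :: "nat list"
  have "finite (A t)" for t
  proof (rule finite_subset)
    show "A t \<subseteq> {xs. set xs \<subseteq> {0..n + 1} \<and> length xs = t}"
      unfolding A_def using member_le_sum_list by fastforce
  qed (rule finite_lists_length_eq[OF finite_atLeastAtMost])
  then have "(\<Sum>t = 1..n + 1. \<Sum>a \<in> A t. h ((a ! (t - 1) + 1) # map (\<lambda>x. x + 1) (take (t - 1) a)))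
      = (\<Sum>p\<in>Sigma {1..n + 1} A. h (j p))"
    unfolding j_def by (subst sum.Sigma) (auto simp: split_def)
  also have "\<dots> = (\<Sum>cs\<in>compositions (n + 1). h cs)"
  proof (rule sum.reindex_bij_witness[where i = i and j = j])
    fix p assume "p \<in> Sigma {1..n + 1} A"
    then obtain t b x where p: "p = (t, b @ [x])" "t \<in> {1..n + 1}" "length b = t - 1"
      "sum_list b + x = n + 1 - t"
      unfolding A_def by (cases "snd p" rule: rev_exhaust) force+
    then have jp: "j p = (x + 1) # map (\<lambda>x. x + 1) b"
      unfolding j_def by (simp add: nth_append)
    show "i (j p) = p"
      unfolding jp i_def using p by (simp add: comp_def)
    show "j p \<in> compositions (n + 1)"
      unfolding jp compositions_def using p sum_list_Suc[of "\<lambda>x. x" b] by auto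
  next
    fix cs assume cs: "cs \<in> compositions (n + 1)"
    then obtain c cs0 where cc: "cs = c # cs0" "0 \<notin> set (cs0 @ [c])"
      unfolding compositions_def by (cases cs) auto
    have pred_Suc: "map (\<lambda>x. Suc (x - 1)) (cs0 @ [c]) = cs0 @ [c]"
    proof (rule map_idI)
      fix x assume "x \<in> set (cs0 @ [c])"
      with cc(2) show "Suc (x - 1) = x"
        by (metis Suc_pred' gr0I)
    qed
    then show "j (i cs) = cs"
      unfolding i_def j_def cc by (simp add: nth_append comp_def)
    from pred_Suc have "sum_list (map (\<lambda>x. x - 1) (cs0 @ [c])) + length cs = n + 1"
      using cs cc sum_list_Suc[of "\<lambda>x. x - 1" "cs0 @ [c]"] unfolding compositions_def by simp
    then show "i cs \<in> Sigma {1..n + 1} A"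
      unfolding i_def A_def cc by auto
  qed simp
  finally show ?thesis
    unfolding A_def .
qed

theorem proposition2p3:
  fixes k n :: nat
  assumes "k \<ge> 1" and "n \<ge> 1"
  shows "mzsv ((k + 1) # replicate n 1) =
    (\<Sum>t = 1..n + 1. \<Sum>a \<in> {a :: nat list. length a = t \<and> sum_list a = n + 1 - t}.
        mzv ((a ! (t - 1) + k + 1) # map (\<lambda>x. x + 1) (take (t - 1) a)))"
proof -
  have "mzsv ((k + 1) # replicate n 1)
      = (\<Sum>cs\<in>compositions (n + 1). mzv ((k + hd cs) # tl cs))"
    using mzsv_eq_sum_compositions[OF \<open>k \<ge> 1\<close>] by simp
  also have "\<dots> = (\<Sum>t = 1..n + 1. \<Sum>a \<in> {a :: nat list. length a = t \<and> sum_list a = n + 1 - t}.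
      mzv ((a ! (t - 1) + k + 1) # map (\<lambda>x. x + 1) (take (t - 1) a)))"
    using sum_compositions_as_weak_compositions[where h = "\<lambda>cs. mzv ((k + hd cs) # tl cs)"]
    by (simp add: add_ac)
  finally show ?thesis .
qed

end
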